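(* For any two disjoint sets of vertices $V_1,V_2$, the complete oddly bipartite $4$-graph $G^{\mathrm{odd}}(V_1,V_2)$ is $\mathscr C_k^{(4)}$-hom-free for each $k\in\{1,2,3\}$. In particular, $\mathrm{ex}(n,C_L^{(4)})\ge e^{\mathrm{opt}}(n)$ for every $n$ and every $L>4$ with $L\not\equiv0\pmod4$.
   Context: $G^{\mathrm{odd}}(V_1,V_2)$ is the $4$-graph on $V_1\cup V_2$ whose edges are the $4$-subsets meeting $V_1$ in an odd number of vertices. For $\ell>4$, the tight cycle $C_\ell^{(4)}$ has vertices $v_1,\dots,v_\ell$ and edges $\{v_i,\dots,v_{i+3}\}$ (indices mod $\ell$). A homomorphism $F\to G$ maps $V(F)\to V(G)$ sending each edge of $F$ onto an edge of $G$; $G$ is $\mathscr C_k^{(4)}$-hom-free if there is no homomorphism $C_\ell^{(4)}\to G$ for any $\ell>4$ with $\ell\equiv k\pmod 4$. $\mathrm{ex}(n,F)$ is the maximum number of edges of an $n$-vertex $4$-graph with no subgraph isomorphic to $F$. $e^{\mathrm{opt}}(n)=\max_{a+b=n}\big(\binom a3b+a\binom b3\big)$. *)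

theory Defs
  imports Main
begin

text \<open>A 4-graph is represented by its edge set, a set of 4-element vertex sets.\<close>

definition G_odd :: "'a set \<Rightarrow> 'a set \<Rightarrow> 'a set set" where
  "G_odd V1 V2 = {e. e \<subseteq> V1 \<union> V2 \<and> card e = 4 \<and> odd (card (e \<inter> V1))}"

definition tight_cycle_edges :: "nat \<Rightarrow> nat set set" where
  "tight_cycle_edges l =
     {{i mod l, (i + 1) mod l, (i + 2) mod l, (i + 3) mod l} | i. i < l}"

definition is_hom_cycle :: "nat \<Rightarrow> (nat \<Rightarrow> 'a) \<Rightarrow> 'a set set \<Rightarrow> bool" where
  "is_hom_cycle l f G \<longleftrightarrow> (\<forall>E \<in> tight_cycle_edges l. f ` E \<in> G)"

definition cycle_hom_free :: "nat \<Rightarrow> 'a set set \<Rightarrow> bool" where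
  "cycle_hom_free k G \<longleftrightarrow>
     \<not> (\<exists>l f. l > 4 \<and> l mod 4 = k mod 4 \<and> is_hom_cycle l f G)"

definition contains_tight_cycle :: "nat \<Rightarrow> 'a set \<Rightarrow> 'a set set \<Rightarrow> bool" where
  "contains_tight_cycle L V H \<longleftrightarrow>
     (\<exists>f. inj_on f {0..<L} \<and> f ` {0..<L} \<subseteq> V \<and> (\<forall>E \<in> tight_cycle_edges L. f ` E \<in> H))"

definition is_4graph_on :: "'a set \<Rightarrow> 'a set set \<Rightarrow> bool" where
  "is_4graph_on V H \<longleftrightarrow> (\<forall>e \<in> H. e \<subseteq> V \<and> card e = 4)"

definition ex_tight_cycle :: "nat \<Rightarrow> nat \<Rightarrow> nat" where
  "ex_tight_cycle n L =
     Max {card H | H. is_4graph_on {0..<n} H \<and> \<not> contains_tight_cycle L {0..<n} H}"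

definition e_opt :: "nat \<Rightarrow> nat" where
  "e_opt n = Max {(a choose 3) * b + a * (b choose 3) | a b. a + b = n}"

end

theory Submission
  imports Defs
begin

text \<open>
  Given a homomorphism f from the tight cycle on 0, ..., l - 1 into G_odd V1 V2, record for every
  vertex i whether f i lies in V1. Each edge meets V1 in an odd number of vertices, so every window
  of four consecutive records has odd sum; comparing two overlapping windows shows that the records
  are 4-periodic. They are also l-periodic, hence gcd 4 l-periodic, and gcd 4 l divides 2 unless
  4 divides l. But then a window reads a, b, a, b and has even sum.
  For the extremal bound, G_odd on the partition {0..<a}, {a..<n} of {0..<n} therefore contains
  no copy of C_L, and it has (a choose 3) * b + a * (b choose 3) edges.
\<close>

lemma periodic_add_mult:
  fixes p :: "nat \<Rightarrow> 'b" and k :: nat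
  assumes "\<And>i. p (i + a) = p i"
  shows "p (i + a * k) = p i"
proof (induction k)
  case (Suc k)
  have "p (i + a * Suc k) = p (i + a * k + a)"
    by (simp add: add_ac)
  also have "\<dots> = p i"
    using assms Suc.IH by simp
  finally show ?case .
qed simp

lemma periodic_add_gcd:
  fixes p :: "nat \<Rightarrow> 'b"
  assumes a: "\<And>i. p (i + a) = p i" and b: "\<And>i. p (i + b) = p i"
  shows "p (i + gcd a b) = p i"
proof (cases "a = 0")
  case True
  then show ?thesis using b by simp
next
  case False
  then obtain x y where xy: "a * x = b * y + gcd a b" using bezout_nat by blast
  have "p (i + gcd a b) = p (i + gcd a b + b * y)" using periodic_add_mult[of p b, OF b] by simp
  also have "\<dots> = p (i + a * x)" by (simp add: xy add_ac)
  also have "\<dots> = p i" using periodic_add_mult[of p a, OF a] .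
  finally show ?thesis .
qed

lemma gcd_4_dvd_2:
  assumes "l mod 4 \<noteq> (0::nat)"
  shows "gcd 4 l dvd 2"
proof -
  have "gcd 4 l = gcd 4 (l mod 4)" by (metis gcd.commute gcd_red_nat)
  moreover have "l mod 4 \<in> {1, 2, 3}" using assms by auto
  ultimately show ?thesis by (auto simp: gcd_non_0_nat)
qed

lemma card_inter_of_card_4:
  assumes "card {a, b, c, d} = 4"
  shows "card ({a, b, c, d} \<inter> V) = of_bool (a \<in> V) + of_bool (b \<in> V) + of_bool (c \<in> V) + of_bool (d \<in> V)"
proof -
  have "distinct [a, b, c, d]"
    using assms by (intro card_distinct) simp
  then show ?thesis
    by (cases "a \<in> V"; cases "b \<in> V"; cases "c \<in> V"; cases "d \<in> V") simp_all
qed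

lemma odd_windows_eq:
  assumes "odd (of_bool a + of_bool b + of_bool c + of_bool d :: nat)"
    and "odd (of_bool b + of_bool c + of_bool d + of_bool e :: nat)"
  shows "a = e"
  using assms by (cases a; cases e) simp_all

lemma even_sum_of_bool_twice:
  "even (of_bool a + of_bool b + of_bool a + of_bool b :: nat)"
  by (cases a; cases b) simp_all

lemma hom_cycle_edge:
  assumes "is_hom_cycle l f G" "l > 0"
  shows "{f (i mod l), f ((i + 1) mod l), f ((i + 2) mod l), f ((i + 3) mod l)} \<in> G"
proof -
  have "{i mod l, (i + 1) mod l, (i + 2) mod l, (i + 3) mod l}
      = {i mod l mod l, (i mod l + 1) mod l, (i mod l + 2) mod l, (i mod l + 3) mod l}"
    by (simp only: mod_add_left_eq mod_mod_trivial)
  also have "\<dots> \<in> tight_cycle_edges l"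
    unfolding tight_cycle_edges_def using \<open>l > 0\<close> by (intro CollectI exI[of _ "i mod l"]) simp
  finally have "f ` {i mod l, (i + 1) mod l, (i + 2) mod l, (i + 3) mod l} \<in> G"
    using assms(1) unfolding is_hom_cycle_def by blast
  then show ?thesis
    by simp
qed

lemma G_odd_no_hom_cycle:
  assumes "l mod 4 \<noteq> 0"
  shows "\<not> is_hom_cycle l f (G_odd V1 V2)"
proof
  assume hom: "is_hom_cycle l f (G_odd V1 V2)"
  have "l > 0" using assms by (auto intro: gr0I)
  define p where "p i \<longleftrightarrow> f (i mod l) \<in> V1" for i
  have odd_window: "odd (of_bool (p i) + of_bool (p (i + 1)) + of_bool (p (i + 2)) + of_bool (p (i + 3)) :: nat)"
    for i
  proof -
    let ?e = "{f (i mod l), f ((i + 1) mod l), f ((i + 2) mod l), f ((i + 3) mod l)}"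
    have "card ?e = 4" "odd (card (?e \<inter> V1))"
      using hom_cycle_edge[OF hom \<open>l > 0\<close>, of i] unfolding G_odd_def by auto
    then show ?thesis
      unfolding card_inter_of_card_4[OF \<open>card ?e = 4\<close>] p_def by blast
  qed
  have period_4: "p (i + 4) = p i" for i
  proof -
    have shift: "i + 1 + 1 = i + 2" "i + 1 + 2 = i + 3" "i + 1 + 3 = i + 4"
      by simp_all
    show ?thesis
      using odd_windows_eq[OF odd_window[of i] odd_window[of "i + 1", unfolded shift]] by simp
  qed
  have period_l: "p (i + l) = p i" for i
    unfolding p_def by simp
  obtain k where "2 = gcd 4 l * k"
    using gcd_4_dvd_2[OF assms] by blast
  then have period_2: "p (i + 2) = p i" for i
    using periodic_add_mult[of p "gcd 4 l", OF periodic_add_gcd[OF period_4 period_l]] by metis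
  have "i + 1 + 2 = i + 3" for i :: nat
    by simp
  then have period_2_shifted: "p (i + 3) = p (i + 1)" for i
    using period_2[of "i + 1"] by metis
  show False
    using odd_window[of 0, unfolded period_2 period_2_shifted] even_sum_of_bool_twice by blast
qed

lemma card_subsets_split:
  assumes "finite V1" "finite V2" "V1 \<inter> V2 = {}"
  shows "card {e. e \<subseteq> V1 \<union> V2 \<and> card (e \<inter> V1) = a \<and> card (e \<inter> V2) = b}
    = (card V1 choose a) * (card V2 choose b)"
proof -
  let ?S = "{A. A \<subseteq> V1 \<and> card A = a} \<times> {B. B \<subseteq> V2 \<and> card B = b}"
  have parts: "(A \<union> B) \<inter> V1 = A" "(A \<union> B) \<inter> V2 = B" if "A \<subseteq> V1" "B \<subseteq> V2" for A B
    using that assms(3) by blast+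
  have "bij_betw (\<lambda>(A, B). A \<union> B) ?S
      {e. e \<subseteq> V1 \<union> V2 \<and> card (e \<inter> V1) = a \<and> card (e \<inter> V2) = b}"
    by (rule bij_betw_byWitness[where f' = "\<lambda>e. (e \<inter> V1, e \<inter> V2)"])
      (auto simp: parts)
  then show ?thesis
    using assms(1,2) by (simp add: bij_betw_same_card[symmetric] card_cartesian_product n_subsets)
qed

lemma G_odd_eq_split:
  assumes "V1 \<inter> V2 = {}"
  shows "G_odd V1 V2
    = {e. e \<subseteq> V1 \<union> V2 \<and> card (e \<inter> V1) = 3 \<and> card (e \<inter> V2) = 1}
    \<union> {e. e \<subseteq> V1 \<union> V2 \<and> card (e \<inter> V1) = 1 \<and> card (e \<inter> V2) = 3}"
proof -
  have card_parts: "card e = card (e \<inter> V1) + card (e \<inter> V2)" if "e \<subseteq> V1 \<union> V2" "finite e" for e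
  proof -
    have "e = (e \<inter> V1) \<union> (e \<inter> V2)"
      using that(1) by blast
    then show ?thesis
      using that(2) assms card_Un_disjoint[of "e \<inter> V1" "e \<inter> V2"] by auto
  qed
  have "card e = 4 \<and> odd (card (e \<inter> V1))
      \<longleftrightarrow> card (e \<inter> V1) = 3 \<and> card (e \<inter> V2) = 1 \<or> card (e \<inter> V1) = 1 \<and> card (e \<inter> V2) = 3"
    if "e \<subseteq> V1 \<union> V2" for e
  proof (cases "finite e")
    case True
    then show ?thesis
      using card_parts[OF that] by presburger
  next
    case False
    then have "infinite (e \<inter> V1) \<or> infinite (e \<inter> V2)"
      using that by (metis Int_Un_distrib Un_infinite le_iff_inf infinite_Un)
    then show ?thesis
      using False by auto
  qed
  then show ?thesis
    unfolding G_odd_def by blast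
qed

lemma card_G_odd:
  assumes "finite V1" "finite V2" "V1 \<inter> V2 = {}"
  shows "card (G_odd V1 V2) = (card V1 choose 3) * card V2 + card V1 * (card V2 choose 3)"
proof -
  let ?E = "\<lambda>a b. {e. e \<subseteq> V1 \<union> V2 \<and> card (e \<inter> V1) = a \<and> card (e \<inter> V2) = b}"
  have "finite (?E a b)" for a b
    using assms(1,2) by (auto intro: finite_subset[of _ "Pow (V1 \<union> V2)"])
  moreover have "?E 3 1 \<inter> ?E 1 3 = {}"
    by auto
  ultimately have "card (?E 3 1 \<union> ?E 1 3) = card (?E 3 1) + card (?E 1 3)"
    by (simp add: card_Un_disjoint)
  then show ?thesis
    using G_odd_eq_split[OF assms(3)] card_subsets_split[OF assms] by simp
qed

lemma is_4graph_on_G_odd: "is_4graph_on (V1 \<union> V2) (G_odd V1 V2)"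
  unfolding is_4graph_on_def G_odd_def by blast

lemma not_contains_tight_cycle_G_odd:
  assumes "L mod 4 \<noteq> 0"
  shows "\<not> contains_tight_cycle L V (G_odd V1 V2)"
  using G_odd_no_hom_cycle[OF assms]
  unfolding contains_tight_cycle_def is_hom_cycle_def by blast

lemma card_le_ex_tight_cycle:
  assumes "is_4graph_on {0..<n} H" "\<not> contains_tight_cycle L {0..<n} H"
  shows "card H \<le> ex_tight_cycle n L"
proof -
  let ?C = "{card H | H. is_4graph_on {0..<n} H \<and> \<not> contains_tight_cycle L {0..<n} H}"
  have "?C \<subseteq> {..card (Pow {0..<n})}"
    unfolding is_4graph_on_def by (auto intro!: card_mono)
  then have "finite ?C"
    by (rule finite_subset) simp
  then show ?thesis
    unfolding ex_tight_cycle_def using assms by (auto intro: Max_ge)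
qed

lemma e_opt_le:
  assumes "\<And>a b. a + b = n \<Longrightarrow> (a choose 3) * b + a * (b choose 3) \<le> m"
  shows "e_opt n \<le> m"
proof -
  let ?splits = "{(a, b). a + b = n}"
  have "finite ?splits"
    by (rule finite_subset[of _ "{..n} \<times> {..n}"]) auto
  moreover have "{(a choose 3) * b + a * (b choose 3) | a b. a + b = n}
      = (\<lambda>(a, b). (a choose 3) * b + a * (b choose 3)) ` ?splits"
    by auto
  ultimately have "finite {(a choose 3) * b + a * (b choose 3) | a b. a + b = n}"
    by simp
  then show ?thesis
    unfolding e_opt_def by (rule Max.boundedI) (use assms in \<open>auto intro: exI[of _ 0]\<close>)
qed

lemma cycle_hom_free_G_odd:
  assumes "k mod 4 \<noteq> 0"
  shows "cycle_hom_free k (G_odd V1 V2)"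
  using assms G_odd_no_hom_cycle unfolding cycle_hom_free_def by metis

lemma e_opt_le_ex_tight_cycle:
  assumes "L mod 4 \<noteq> 0"
  shows "e_opt n \<le> ex_tight_cycle n L"
proof (rule e_opt_le)
  fix a b
  assume "a + b = n"
  then have parts: "{0..<a} \<union> {a..<n} = {0..<n}" "card {a..<n} = b"
    by auto
  let ?G = "G_odd {0..<a} {a..<n}"
  have "(a choose 3) * b + a * (b choose 3) = card ?G"
    using card_G_odd[of "{0..<a}" "{a..<n}"] parts by simp
  also have "\<dots> \<le> ex_tight_cycle n L"
    by (rule card_le_ex_tight_cycle[OF is_4graph_on_G_odd[of "{0..<a}" "{a..<n}", unfolded parts]
          not_contains_tight_cycle_G_odd[OF assms]])
  finally show "(a choose 3) * b + a * (b choose 3) \<le> ex_tight_cycle n L" .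
qed

theorem proposition3p15:
  fixes V1 V2 :: "'a set"
  assumes "V1 \<inter> V2 = {}"
  shows "(\<forall>k \<in> {1, 2, 3}. cycle_hom_free k (G_odd V1 V2))
    \<and> (\<forall>n L. L > 4 \<and> L mod 4 \<noteq> 0 \<longrightarrow> e_opt n \<le> ex_tight_cycle n L)"
proof (intro conjI ballI allI impI)
  fix k :: nat
  assume "k \<in> {1, 2, 3}"
  then show "cycle_hom_free k (G_odd V1 V2)"
    by (intro cycle_hom_free_G_odd) auto
next
  fix n L :: nat
  assume "4 < L \<and> L mod 4 \<noteq> 0"
  then show "e_opt n \<le> ex_tight_cycle n L"
    by (intro e_opt_le_ex_tight_cycle) simp
qed

end
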